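(* Let $\mathcal{A}:\mathbb{C}^{m\times n}\to\mathbb{C}^p$ be linear with rank-restricted isometry constant $\delta_r(\mathcal{A})$. Let $\Psi,\Upsilon\subset\mathbb{O}$ be sets of atoms and $X\in\mathbb{C}^{m\times n}$ such that $\mathcal{P}_\Upsilon^\perp\mathcal{P}_\Psi=\mathcal{P}_\Psi\mathcal{P}_\Upsilon^\perp$, $\mathcal{P}_\Upsilon^\perp X=0$, and $|\Psi|\le r$. Then $\|\mathcal{P}_\Upsilon^\perp\mathcal{P}_\Psi\mathcal{A}^*\mathcal{A}\mathcal{P}_\Psi X\|_F\le\sqrt2\,\delta_r(\mathcal{A})\|\mathcal{P}_\Psi X\|_F$.
   Context: $\mathbb{C}^p$ has inner product $\langle x,y\rangle=y^Hx$ and norm $\|\cdot\|_2$; $\mathbb{C}^{m\times n}$ has inner product $\langle X,Y\rangle=\mathrm{tr}(Y^HX)$ and Frobenius norm $\|\cdot\|_F$; $\mathcal{A}^*$ is the adjoint of $\mathcal{A}$. $\delta_r(\mathcal{A})$ is the smallest $\delta\ge0$ such that $(1-\delta)\|X\|_F^2\le\|\mathcal{A}X\|_2^2\le(1+\delta)\|X\|_F^2$ for all $X$ with $\mathrm{rank}(X)\le r$. The set of atoms $\mathbb{O}$ is a set of unit-Frobenius-norm rank-one matrices in $\mathbb{C}^{m\times n}$ such that every nonzero rank-one matrix is a scalar multiple of exactly one element of $\mathbb{O}$. For $\Psi\subset\mathbb{O}$, $\mathcal{P}_\Psi$ is the orthogonal projection onto $\mathrm{span}(\Psi)$ and $\mathcal{P}_\Psi^\perp=I-\mathcal{P}_\Psi$.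 *)

theory Defs
  imports "HOL-Analysis.Analysis"
begin

text \<open>Matrices in C^(m x n) are complex^'n^'m (rows indexed by 'm, columns by 'n);
  vectors in C^p are complex^'p.  The norm of these types is the Euclidean / Frobenius norm.\<close>

definition mscale :: "complex \<Rightarrow> complex^'n^'m \<Rightarrow> complex^'n^'m" where
  "mscale c X = (\<chi> i j. c * X$i$j)"

definition cinner :: "complex^'p \<Rightarrow> complex^'p \<Rightarrow> complex" where
  "cinner x y = (\<Sum>i\<in>UNIV. x$i * cnj (y$i))"

definition frob_inner :: "complex^'n^'m \<Rightarrow> complex^'n^'m \<Rightarrow> complex" where
  "frob_inner X Y = (\<Sum>i\<in>UNIV. \<Sum>j\<in>UNIV. X$i$j * cnj (Y$i$j))"

definition cspan :: "(complex^'n^'m) set \<Rightarrow> (complex^'n^'m) set" where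
  "cspan S = module.span mscale S"

definition proj :: "(complex^'n^'m) set \<Rightarrow> complex^'n^'m \<Rightarrow> complex^'n^'m" where
  "proj S X = (THE Y. Y \<in> cspan S \<and> (\<forall>Z\<in>cspan S. frob_inner (X - Y) Z = 0))"

definition proj_perp :: "(complex^'n^'m) set \<Rightarrow> complex^'n^'m \<Rightarrow> complex^'n^'m" where
  "proj_perp S X = X - proj S X"

definition clinear_map :: "(complex^'n^'m \<Rightarrow> complex^'p) \<Rightarrow> bool" where
  "clinear_map A = Vector_Spaces.linear mscale (*s) A"

definition adj :: "(complex^'n^'m \<Rightarrow> complex^'p) \<Rightarrow> complex^'p \<Rightarrow> complex^'n^'m" where
  "adj A y = (THE W. \<forall>Z. cinner (A Z) y = frob_inner Z W)"

definition rip_const :: "nat \<Rightarrow> (complex^'n^'m \<Rightarrow> complex^'p) \<Rightarrow> real" where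
  "rip_const r A = Inf {\<delta>. \<delta> \<ge> 0 \<and> (\<forall>X::complex^'n^'m. rank X \<le> r \<longrightarrow>
      (1 - \<delta>) * (norm X)^2 \<le> (norm (A X))^2 \<and> (norm (A X))^2 \<le> (1 + \<delta>) * (norm X)^2)}"

definition atom_set :: "(complex^'n^'m) set \<Rightarrow> bool" where
  "atom_set Atoms \<longleftrightarrow> (\<forall>a\<in>Atoms. rank a = 1 \<and> norm a = 1) \<and>
     (\<forall>X::complex^'n^'m. rank X = 1 \<longrightarrow> (\<exists>!a. a \<in> Atoms \<and> (\<exists>c. X = mscale c a)))"

end

theory Submission
  imports Defs
begin

text \<open>With \<open>Z = P\<^sub>\<Psi> X\<close> and \<open>W = P\<^sub>\<Upsilon>\<^sup>\<perp> P\<^sub>\<Psi> A\<^sup>* A Z\<close>, the commutation hypothesis puts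
  both \<open>W\<close> and \<open>Z\<close> into \<open>span \<Psi>\<close>, whose elements have rank at most \<open>|\<Psi>| \<le> r\<close>, while
  \<open>P\<^sub>\<Upsilon>\<^sup>\<perp> X = 0\<close> puts \<open>Z\<close> into \<open>span \<Upsilon>\<close>, so \<open>W \<perp> Z\<close>.  Then
  \<open>\<parallel>W\<parallel>\<^sup>2 = \<langle>A W, A Z\<rangle>\<close>, and polarizing the restricted isometry property on the pair
  \<open>\<parallel>Z\<parallel> W \<plusminus> \<parallel>W\<parallel> Z\<close> of equal-norm elements of \<open>span \<Psi>\<close> bounds this by
  \<open>\<delta>\<^sub>r \<parallel>W\<parallel> \<parallel>Z\<parallel>\<close>.  This gives the claim even without the factor \<open>\<surd>2\<close>.
  Throughout, the complex Hilbert space structure is handled through its real part: the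
  real inner product \<open>\<bullet>\<close> of the Euclidean space \<open>complex^'n^'m\<close> is \<open>Re\<close> of the Frobenius
  inner product, and complex spans are closed under multiplication by \<open>\<i>\<close>.\<close>

interpretation ms: vector_space "mscale :: complex \<Rightarrow> complex^'n^'m \<Rightarrow> complex^'n^'m"
  by unfold_locales (auto simp: mscale_def vec_eq_iff algebra_simps)

lemma mscale_of_real: "mscale (of_real c) X = c *\<^sub>R X"
  by (simp add: mscale_def vec_eq_iff scaleR_conv_of_real[where 'a=complex])

lemma vector_scalar_mult_of_real: "(of_real c :: complex) *s (x::complex^'p) = c *\<^sub>R x"
  by (simp add: vec_eq_iff scaleR_conv_of_real[where 'a=complex])

lemma subspace_cspan: "subspace (cspan S)"
  unfolding subspace_def cspan_def
  by (metis ms.span_zero ms.span_add ms.span_scale mscale_of_real)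

lemma inner_eq_Re_frob_inner: "x \<bullet> y = Re (frob_inner x y)"
  by (simp add: inner_vec_def frob_inner_def inner_complex_def)

lemma inner_eq_Re_cinner: "x \<bullet> y = Re (cinner x y)"
  by (simp add: inner_vec_def cinner_def inner_complex_def)

lemma frob_inner_mscale_left: "frob_inner (mscale c x) y = c * frob_inner x y"
  by (simp add: frob_inner_def mscale_def sum_distrib_left mult.assoc)

lemma frob_inner_mscale_right: "frob_inner x (mscale c y) = cnj c * frob_inner x y"
  by (simp add: frob_inner_def mscale_def sum_distrib_left algebra_simps)

lemma cinner_scale_left: "cinner (c *s x) y = c * cinner x y"
  by (simp add: cinner_def sum_distrib_left mult.assoc)

lemma frob_inner_eq_0_if_orthogonal_cspan:
  assumes "\<forall>z\<in>cspan S. w \<bullet> z = 0" and "z \<in> cspan S"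
  shows "frob_inner w z = 0"
proof -
  have "mscale \<i> z \<in> cspan S"
    using assms(2) unfolding cspan_def by (rule ms.span_scale)
  then have "Re (frob_inner w (mscale \<i> z)) = 0"
    using assms(1) by (simp add: inner_eq_Re_frob_inner)
  then have "Im (frob_inner w z) = 0"
    by (simp add: frob_inner_mscale_right)
  moreover have "Re (frob_inner w z) = 0"
    using assms by (simp add: inner_eq_Re_frob_inner)
  ultimately show ?thesis by (simp add: complex_eq_iff)
qed

lemma proj_eqI:
  assumes "y \<in> cspan S" and "\<forall>z\<in>cspan S. (X - y) \<bullet> z = 0"
  shows "proj S X = y"
  unfolding proj_def
proof (rule the_equality)
  show "y \<in> cspan S \<and> (\<forall>z\<in>cspan S. frob_inner (X - y) z = 0)"
    using assms frob_inner_eq_0_if_orthogonal_cspan by blast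
next
  fix y' assume y': "y' \<in> cspan S \<and> (\<forall>z\<in>cspan S. frob_inner (X - y') z = 0)"
  have "y - y' \<in> cspan S"
    using assms(1) y' subspace_cspan subspace_diff by blast
  then have "(X - y') \<bullet> (y - y') - (X - y) \<bullet> (y - y') = 0"
    using assms(2) y' by (simp add: inner_eq_Re_frob_inner)
  then have "(y - y') \<bullet> (y - y') = 0"
    by (simp add: inner_diff_left inner_diff_right)
  then show "y' = y" by simp
qed

lemma proj_in_cspan_and_orthogonal:
  "proj S X \<in> cspan S \<and> (\<forall>z\<in>cspan S. (X - proj S X) \<bullet> z = 0)"
proof -
  have "span (cspan S) = cspan S"
    using subspace_cspan by (rule span_eq_iff[THEN iffD2])
  then obtain y z where "y \<in> cspan S" "\<And>w. w \<in> cspan S \<Longrightarrow> orthogonal z w" "X = y + z"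
    using orthogonal_subspace_decomp_exists[of "cspan S" X] by metis
  then have "y \<in> cspan S" "\<forall>w\<in>cspan S. (X - y) \<bullet> w = 0"
    by (auto simp: orthogonal_def)
  then show ?thesis using proj_eqI by metis
qed

lemma proj_in_cspan: "proj S X \<in> cspan S"
  using proj_in_cspan_and_orthogonal by blast

lemma proj_perp_orthogonal: "z \<in> cspan S \<Longrightarrow> proj_perp S X \<bullet> z = 0"
  using proj_in_cspan_and_orthogonal[of S X] unfolding proj_perp_def by blast

lemma proj_zero: "proj S 0 = 0"
  by (rule proj_eqI) (auto simp: subspace_cspan subspace_0)

lemma in_cspan_if_proj_perp_eq_0: "proj_perp S X = 0 \<Longrightarrow> X \<in> cspan S"
  using proj_in_cspan[of S X] by (simp add: proj_perp_def)

lemma inner_proj_right: "W \<in> cspan S \<Longrightarrow> W \<bullet> proj S G = W \<bullet> G"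
  using proj_perp_orthogonal[of W S G]
  by (simp add: proj_perp_def inner_diff_right inner_commute)

lemma inner_proj_perp_self: "proj_perp S Y \<bullet> proj_perp S Y = proj_perp S Y \<bullet> Y"
proof -
  have "proj_perp S Y \<bullet> proj S Y = 0"
    by (rule proj_perp_orthogonal[OF proj_in_cspan])
  then show ?thesis by (simp add: proj_perp_def inner_diff_right)
qed

lemma linear_if_clinear_map:
  assumes "clinear_map (A :: complex^'n^'m \<Rightarrow> complex^'p)"
  shows "linear A"
proof -
  have "\<And>x y. A (x + y) = A x + A y" and "\<And>c x. A (mscale c x) = c *s A x"
    using assms unfolding clinear_map_def Vector_Spaces.linear_iff by auto
  then show ?thesis
    by (intro linearI) (auto simp: mscale_of_real[symmetric] vector_scalar_mult_of_real)
qed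

lemma adj_eq_adjoint:
  assumes "clinear_map (A :: complex^'n^'m \<Rightarrow> complex^'p)"
  shows "adj A y = adjoint A y"
  unfolding adj_def
proof (rule the_equality)
  have lin: "linear A" using assms by (rule linear_if_clinear_map)
  have Re_eq: "Re (cinner (A Z) y) = Re (frob_inner Z (adjoint A y))" for Z
    using adjoint_works[OF lin] by (metis inner_eq_Re_frob_inner inner_eq_Re_cinner)
  show "\<forall>Z. cinner (A Z) y = frob_inner Z (adjoint A y)"
  proof
    fix Z
    have sc: "\<And>c X. A (mscale c X) = c *s A X"
      using assms unfolding clinear_map_def Vector_Spaces.linear_iff by blast
    have "Im (cinner (A Z) y) = Re (cinner (A (mscale (-\<i>) Z)) y)"
      by (simp only: sc cinner_scale_left) simp
    also have "\<dots> = Re (frob_inner (mscale (-\<i>) Z) (adjoint A y))" by (rule Re_eq)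
    also have "\<dots> = Im (frob_inner Z (adjoint A y))"
      by (simp only: frob_inner_mscale_left) simp
    finally show "cinner (A Z) y = frob_inner Z (adjoint A y)"
      using Re_eq[of Z] by (simp add: complex_eq_iff)
  qed
next
  fix W assume "\<forall>Z. cinner (A Z) y = frob_inner Z W"
  then have "Z \<bullet> W = Z \<bullet> adjoint A y" for Z
    using adjoint_works[OF linear_if_clinear_map[OF assms]]
    by (metis inner_eq_Re_frob_inner inner_eq_Re_cinner)
  then have "(W - adjoint A y) \<bullet> (W - adjoint A y) = 0"
    by (simp add: inner_diff_right)
  then show "W = adjoint A y" by simp
qed

lemma row_sum_mscale:
  "row i (\<Sum>a\<in>P. mscale (u a) a) = (\<Sum>a\<in>P. u a *s row i (a::complex^'n^'m))"
  by (simp add: vec_eq_iff row_def mscale_def sum_component)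

lemma rank_le_card_if_in_cspan:
  fixes S :: "(complex^'n^'m) set"
  assumes "finite S" and "\<forall>a\<in>S. rank a \<le> 1" and "Y \<in> cspan S"
  shows "rank Y \<le> card S"
proof -
  have "\<exists>v. rows a \<subseteq> vec.span {v}" if "a \<in> S" for a
  proof -
    obtain B where B: "rows a \<subseteq> vec.span B" "vec.independent B" "card B = vec.dim (rows a)"
      using vec.basis_exists by blast
    have "card B \<le> 1"
      using B(3) \<open>a \<in> S\<close> assms(2) by (simp add: row_rank_def_gen)
    moreover have "finite B" using B(2) by (rule vec.finiteI_independent)
    ultimately obtain v where "B \<subseteq> {v}"
      by (cases "B = {}") (auto simp: card_le_Suc0_iff_eq)
    then show ?thesis using B(1) vec.span_mono by blast
  qed
  then obtain v where v: "\<forall>a\<in>S. rows a \<subseteq> vec.span {v a}" by metis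
  obtain u where Y: "Y = (\<Sum>a\<in>S. mscale (u a) a)"
    using assms(3) unfolding cspan_def ms.span_finite[OF assms(1)] by blast
  have "row i a \<in> vec.span (v ` S)" if "a \<in> S" for i a
    using v that vec.span_mono[of "{v a}" "v ` S"] by (auto simp: rows_def)
  then have "rows Y \<subseteq> vec.span (v ` S)"
    unfolding Y rows_def row_sum_mscale by (auto intro!: vec.span_sum vec.span_scale)
  then have "vec.dim (rows Y) \<le> card (v ` S)"
    using assms(1) by (intro vec.dim_le_card) auto
  also have "\<dots> \<le> card S" using assms(1) by (rule card_image_le)
  finally show ?thesis by (simp add: row_rank_def_gen)
qed

text \<open>Polarization: \<open>p = \<parallel>Z\<parallel> W + \<parallel>W\<parallel> Z\<close> and \<open>q = \<parallel>Z\<parallel> W - \<parallel>W\<parallel> Z\<close> have the same norm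
  because \<open>W \<perp> Z\<close>, and \<open>\<parallel>A p\<parallel>\<^sup>2 - \<parallel>A q\<parallel>\<^sup>2 = 4 \<parallel>W\<parallel> \<parallel>Z\<parallel> \<langle>A W, A Z\<rangle>\<close>.\<close>

lemma inner_image_orthogonal_le:
  fixes A :: "'a::real_inner \<Rightarrow> 'b::real_inner"
  assumes lin: "linear A" and "subspace V"
    and iso: "\<forall>X\<in>V. (1 - \<delta>) * (norm X)\<^sup>2 \<le> (norm (A X))\<^sup>2 \<and> (norm (A X))\<^sup>2 \<le> (1 + \<delta>) * (norm X)\<^sup>2"
    and "W \<in> V" "Z \<in> V" and orth: "W \<bullet> Z = 0"
  shows "A W \<bullet> A Z \<le> \<delta> * norm W * norm Z"
proof (cases "W = 0 \<or> Z = 0")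
  case True
  then show ?thesis using lin by (auto simp: linear_0)
next
  case False
  define a b where "a = norm W" and "b = norm Z"
  define p q where "p = b *\<^sub>R W + a *\<^sub>R Z" and "q = b *\<^sub>R W - a *\<^sub>R Z"
  have "p \<in> V" "q \<in> V"
    unfolding p_def q_def using assms by (auto intro: subspace_add subspace_diff subspace_scale)
  moreover have "(norm p)\<^sup>2 = 2 * a\<^sup>2 * b\<^sup>2" "(norm q)\<^sup>2 = 2 * a\<^sup>2 * b\<^sup>2"
  proof -
    have "W \<bullet> W = a\<^sup>2" "Z \<bullet> Z = b\<^sup>2" "Z \<bullet> W = 0"
      using orth by (simp_all add: a_def b_def power2_norm_eq_inner inner_commute)
    then show "(norm p)\<^sup>2 = 2 * a\<^sup>2 * b\<^sup>2" "(norm q)\<^sup>2 = 2 * a\<^sup>2 * b\<^sup>2"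
      using orth unfolding power2_norm_eq_inner p_def q_def
      by (simp_all add: inner_add_left inner_add_right inner_diff_left inner_diff_right
          power2_eq_square)
  qed
  ultimately have "(norm (A p))\<^sup>2 \<le> (1 + \<delta>) * (2 * a\<^sup>2 * b\<^sup>2)"
    and "(1 - \<delta>) * (2 * a\<^sup>2 * b\<^sup>2) \<le> (norm (A q))\<^sup>2"
    using iso by metis+
  then have "(norm (A p))\<^sup>2 - (norm (A q))\<^sup>2 \<le> 4 * a * b * (\<delta> * a * b)"
    by (simp add: power2_eq_square algebra_simps)
  moreover have "(norm (A p))\<^sup>2 - (norm (A q))\<^sup>2 = 4 * a * b * (A W \<bullet> A Z)"
    unfolding power2_norm_eq_inner p_def q_def using lin
    by (simp add: linear_add linear_diff linear_scale inner_add_left inner_add_right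
        inner_diff_left inner_diff_right inner_commute algebra_simps)
  moreover have "4 * a * b > 0" using False by (simp add: a_def b_def)
  ultimately have "A W \<bullet> A Z \<le> \<delta> * a * b"
    using mult_le_cancel_left_pos by metis
  then show ?thesis by (simp add: a_def b_def)
qed

definition rip_bound :: "nat \<Rightarrow> (complex^'n^'m \<Rightarrow> complex^'p) \<Rightarrow> real \<Rightarrow> bool" where
  "rip_bound r A \<delta> \<longleftrightarrow> \<delta> \<ge> 0 \<and> (\<forall>X::complex^'n^'m. rank X \<le> r \<longrightarrow>
      (1 - \<delta>) * (norm X)\<^sup>2 \<le> (norm (A X))\<^sup>2 \<and> (norm (A X))\<^sup>2 \<le> (1 + \<delta>) * (norm X)\<^sup>2)"

lemma rip_const_eq_Inf: "rip_const r A = Inf (Collect (rip_bound r A))"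
  by (simp add: rip_const_def rip_bound_def[abs_def])

lemma rip_bound_exists:
  fixes A :: "complex^'n^'m \<Rightarrow> complex^'p"
  assumes "linear A"
  shows "\<exists>\<delta>. rip_bound r A \<delta>"
proof -
  obtain B where B: "\<And>x. norm (A x) \<le> B * norm x"
    using linear_bounded[OF assms] by blast
  have "(norm (A X))\<^sup>2 \<le> (1 + (1 + B\<^sup>2)) * (norm X)\<^sup>2" for X
  proof -
    have "(norm (A X))\<^sup>2 \<le> (B * norm X)\<^sup>2"
      using B[of X] by (simp add: power_mono)
    also have "\<dots> \<le> (1 + (1 + B\<^sup>2)) * (norm X)\<^sup>2"
      by (simp add: power_mult_distrib mult_right_mono)
    finally show ?thesis .
  qed
  moreover have "(1 - (1 + B\<^sup>2)) * (norm X)\<^sup>2 \<le> (norm (A X))\<^sup>2" for X :: "complex^'n^'m"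
    by (rule order_trans[of _ 0]) (auto intro: mult_nonpos_nonneg)
  moreover have "0 \<le> 1 + B\<^sup>2" by simp
  ultimately show ?thesis unfolding rip_bound_def by blast
qed

lemma rip_const_nonneg: "linear A \<Longrightarrow> 0 \<le> rip_const r A"
  unfolding rip_const_eq_Inf
  by (rule cInf_greatest) (use rip_bound_exists in \<open>auto simp: rip_bound_def\<close>)

lemma le_rip_const_mult:
  assumes "linear A" and "0 \<le> b" and bound: "\<And>\<delta>. rip_bound r A \<delta> \<Longrightarrow> a \<le> \<delta> * b"
  shows "a \<le> rip_const r A * b"
proof (cases "b = 0")
  case True
  then show ?thesis using bound rip_bound_exists[OF assms(1)] by force
next
  case False
  then have "a / b \<le> rip_const r A"
    unfolding rip_const_eq_Inf using assms rip_bound_exists[OF assms(1)]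
    by (intro cInf_greatest) (auto simp: divide_le_eq)
  then show ?thesis using False assms(2) by (simp add: divide_le_eq)
qed

lemma inner_image_orthogonal_le_rip_const:
  assumes lin: "linear A" and "subspace V" and "\<forall>Y\<in>V. rank Y \<le> r"
    and "W \<in> V" "Z \<in> V" "W \<bullet> Z = 0"
  shows "A W \<bullet> A Z \<le> rip_const r A * norm W * norm Z"
proof -
  have "A W \<bullet> A Z \<le> \<delta> * (norm W * norm Z)" if "rip_bound r A \<delta>" for \<delta>
    using inner_image_orthogonal_le[OF lin, of V \<delta> W Z] assms that
    by (simp add: rip_bound_def mult.assoc)
  then show ?thesis using le_rip_const_mult[OF lin] by (simp add: mult.assoc)
qed

theorem corollary1:
  fixes A :: "complex^'n^'m \<Rightarrow> complex^'p"
    and Atoms \<Psi> \<Upsilon> :: "(complex^'n^'m) set"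
    and X :: "complex^'n^'m"
    and r :: nat
  assumes "clinear_map A"
    and "atom_set Atoms"
    and "\<Psi> \<subseteq> Atoms" and "\<Upsilon> \<subseteq> Atoms"
    and "proj_perp \<Upsilon> \<circ> proj \<Psi> = proj \<Psi> \<circ> proj_perp \<Upsilon>"
    and "proj_perp \<Upsilon> X = 0"
    and "finite \<Psi>" and "card \<Psi> \<le> r"
  shows "norm (proj_perp \<Upsilon> (proj \<Psi> (adj A (A (proj \<Psi> X)))))
           \<le> sqrt 2 * rip_const r A * norm (proj \<Psi> X)"
proof -
  have lin: "linear A" using assms(1) by (rule linear_if_clinear_map)
  have \<delta>_nonneg: "0 \<le> rip_const r A" using lin by (rule rip_const_nonneg)
  have comm: "proj_perp \<Upsilon> (proj \<Psi> Y) = proj \<Psi> (proj_perp \<Upsilon> Y)" for Y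
    using assms(5) by (metis comp_apply)
  define Z where "Z = proj \<Psi> X"
  define W where "W = proj_perp \<Upsilon> (proj \<Psi> (adj A (A Z)))"
  have Z_\<Psi>: "Z \<in> cspan \<Psi>" and W_\<Psi>: "W \<in> cspan \<Psi>"
    unfolding Z_def W_def comm by (rule proj_in_cspan)+
  have "Z \<in> cspan \<Upsilon>"
    using assms(6) by (intro in_cspan_if_proj_perp_eq_0) (simp add: Z_def comm proj_zero)
  then have orth: "W \<bullet> Z = 0" unfolding W_def by (rule proj_perp_orthogonal)
  have rank: "\<forall>Y\<in>cspan \<Psi>. rank Y \<le> r"
    using assms(2,3,7,8) rank_le_card_if_in_cspan[OF assms(7)]
    by (fastforce simp: atom_set_def)
  have "norm W * norm W = W \<bullet> adj A (A Z)"
    by (simp add: W_def inner_proj_perp_self inner_proj_right[OF W_\<Psi>[unfolded W_def]]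
        flip: dot_square_norm power2_eq_square)
  also have "\<dots> = A W \<bullet> A Z"
    by (simp add: adj_eq_adjoint[OF assms(1)] adjoint_works[OF lin])
  also have "\<dots> \<le> rip_const r A * norm W * norm Z"
    by (rule inner_image_orthogonal_le_rip_const[OF lin subspace_cspan rank W_\<Psi> Z_\<Psi> orth])
  finally have "norm W \<le> rip_const r A * norm Z"
    using \<delta>_nonneg by (cases "W = 0") (auto simp: mult.commute mult.left_commute)
  also have "\<dots> \<le> sqrt 2 * rip_const r A * norm Z"
    using \<delta>_nonneg by (intro mult_right_mono) (simp_all add: mult_le_cancel_right1)
  finally show ?thesis unfolding W_def Z_def .
qed

end
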